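(* Suppose Assumptions (A1) and (A2) below hold and $\omega_0\sim\pi_\eta$. Then for all sufficiently small $\gamma>0$ there is a constant $C$ such that $$\mathbb{E}\exp\{\gamma|\omega_k|^2\}\le C\quad\text{for every }k\ge0.$$
   Context: Let $\psi:\mathbb{R}^d\times\mathbb{R}^r\to\mathbb{R}$ be differentiable in its first argument, $\zeta\sim\nu$ on $\mathbb{R}^r$, $P(\omega)=\mathbb{E}\psi(\omega,\zeta)$, $\nabla P=\mathbb{E}\nabla\psi(\cdot,\zeta)$. The SGLD chain with step size $\eta>0$ (small) and inverse temperature parameter $\delta>0$ is $\omega_k=\omega_{k-1}-\eta\nabla\psi(\omega_{k-1},\zeta_k)+\sqrt{\eta\delta}\,\xi_k$, with $(\xi_k)$ i.i.d. $N(0,I_d)$, $(\zeta_k)$ i.i.d. with law $\nu$, all independent of each other and of $\omega_0$; $\pi_\eta$ is its invariant probability measure. Assumption (A1): there exist $L,K_1>0$, $K_2\ge0$ with $|\nabla\psi(x,z)-\nabla\psi(y,z)|\le L|x-y|$ and $\langle x-y,-\nabla\psi(x,z)+\nabla\psi(y,z)\rangle\le-K_1|x-y|^2+K_2$ for all $x,y,z$. Assumption (A2): for every $x$, $\nabla\psi(x,\zeta)$ is sub-Gaussian, i.e. $\mathbb{E}\exp\{K_\zeta|\nabla\psi(x,\zeta)|^2\}\le C$ for some $K_\zeta,C>0$. *)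

theory Defs
  imports "HOL-Probability.Probability"
begin

definition std_gauss :: "'a::euclidean_space measure" where
  "std_gauss = density lborel
     (\<lambda>x. ennreal ((2 * pi) powr (- real DIM('a) / 2) * exp (- (norm x)\<^sup>2 / 2)))"

definition sgld_kernel ::
  "('a::euclidean_space \<Rightarrow> 'c::euclidean_space \<Rightarrow> 'a) \<Rightarrow> 'c measure \<Rightarrow> real \<Rightarrow> real \<Rightarrow> 'a \<Rightarrow> 'a measure" where
  "sgld_kernel g \<nu> \<eta> \<delta> x =
     distr (\<nu> \<Otimes>\<^sub>M std_gauss) borel
       (\<lambda>(z, e). x - \<eta> *\<^sub>R g x z + sqrt (\<eta> * \<delta>) *\<^sub>R e)"

text \<open>Law of omega_k when omega_0 has law mu0.\<close>
fun sgld_law ::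
  "('a::euclidean_space \<Rightarrow> 'c::euclidean_space \<Rightarrow> 'a) \<Rightarrow> 'c measure \<Rightarrow> real \<Rightarrow> real \<Rightarrow> 'a measure \<Rightarrow> nat \<Rightarrow> 'a measure" where
  "sgld_law g \<nu> \<eta> \<delta> \<mu>0 0 = \<mu>0"
| "sgld_law g \<nu> \<eta> \<delta> \<mu>0 (Suc k) = sgld_law g \<nu> \<eta> \<delta> \<mu>0 k \<bind> sgld_kernel g \<nu> \<eta> \<delta>"

end

theory Submission
  imports Defs "HOL-Probability.Distributions"
begin

(* By dissipativity (A1), one SGLD step from x satisfies, for eta small,
     |x - eta g(x,z) + sqrt(eta delta) e|^2
       <= (1 - eta K1/2) |x|^2 + c0 + c1 |g(0,z)|^2 + c2 |e|^2.
   Exponentiating with a small gamma and integrating against the sub-Gaussian law of g(0,zeta)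
   (A2) and the Gaussian law of e gives the Lyapunov drift
     P exp(gamma |.|^2) (x) <= D exp(gamma (1 - eta K1/2) |x|^2) <= exp(gamma |x|^2)/2 + B.
   Integrating the drift against an invariant law pi (after truncating, so that no infinite
   quantity has to be cancelled) bounds pi(exp(gamma |.|^2)) by 2B, and omega_k has law pi
   for every k. *)

lemma nn_integral_exp_neg_sq_lborel:
  fixes a :: real
  assumes "a > 0"
  shows "(\<integral>\<^sup>+t. ennreal (exp (- a * t\<^sup>2)) \<partial>lborel) = ennreal (sqrt (pi / a))"
proof -
  define \<sigma> where "\<sigma> = sqrt (1 / (2 * a))"
  have density: "normal_density 0 \<sigma> t = sqrt (a / pi) * exp (- a * t\<^sup>2)" for t
    using assms by (simp add: normal_density_def \<sigma>_def field_simps real_sqrt_divide)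
  have "(\<integral>\<^sup>+t. ennreal (normal_density 0 \<sigma> t) \<partial>lborel) = 1"
    using assms by (subst nn_integral_eq_integral) (auto simp: \<sigma>_def)
  then have "ennreal (sqrt (a / pi)) * (\<integral>\<^sup>+t. ennreal (exp (- a * t\<^sup>2)) \<partial>lborel) = 1"
    using assms by (simp add: density ennreal_mult' nn_integral_cmult)
  moreover have "ennreal (sqrt (pi / a)) * ennreal (sqrt (a / pi)) = 1"
    using assms by (simp add: ennreal_mult[symmetric] real_sqrt_mult[symmetric])
  ultimately show ?thesis
    by (metis mult.assoc mult_1 mult_1_right)
qed

lemma nn_integral_exp_neg_norm_sq_lborel:
  fixes a :: real
  assumes "a > 0"
  shows "(\<integral>\<^sup>+x. ennreal (exp (- a * (norm x)\<^sup>2)) \<partial>(lborel :: 'a::euclidean_space measure))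
           = ennreal (sqrt (pi / a) ^ DIM('a))"
proof -
  have "ennreal (exp (- a * (norm x)\<^sup>2)) = (\<Prod>b\<in>Basis. ennreal (exp (- a * (x \<bullet> b)\<^sup>2)))"
    for x :: 'a
  proof -
    have "(norm x)\<^sup>2 = (\<Sum>b\<in>Basis. (x \<bullet> b)\<^sup>2)"
      unfolding power2_norm_eq_inner by (subst euclidean_inner) (simp add: power2_eq_square)
    then show ?thesis
      by (simp add: sum_distrib_left exp_sum prod_ennreal)
  qed
  then have "(\<integral>\<^sup>+x. ennreal (exp (- a * (norm x)\<^sup>2)) \<partial>(lborel :: 'a measure))
      = (\<integral>\<^sup>+x. (\<Prod>b\<in>Basis. ennreal (exp (- a * (x \<bullet> b)\<^sup>2))) \<partial>(lborel :: 'a measure))"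
    by simp
  also have "\<dots> = (\<Prod>b\<in>(Basis :: 'a set). \<integral>\<^sup>+t. ennreal (exp (- a * t\<^sup>2)) \<partial>lborel)"
    by (subst nn_integral_lborel_prod) auto
  also have "\<dots> = ennreal (sqrt (pi / a) ^ DIM('a))"
    using assms nn_integral_exp_neg_sq_lborel[OF assms] by (simp add: ennreal_power)
  finally show ?thesis .
qed

lemma nn_integral_std_gauss_exp_norm_sq:
  fixes c :: real
  assumes "c < 1/2"
  shows "(\<integral>\<^sup>+x. ennreal (exp (c * (norm x)\<^sup>2)) \<partial>(std_gauss :: 'a::euclidean_space measure))
           = ennreal ((2 * pi) powr (- real DIM('a) / 2) * sqrt (pi / (1/2 - c)) ^ DIM('a))"
proof -
  let ?k = "(2 * pi) powr (- real DIM('a) / 2)"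
  have "(\<integral>\<^sup>+x. ennreal (exp (c * (norm x)\<^sup>2)) \<partial>(std_gauss :: 'a measure))
      = (\<integral>\<^sup>+x. ennreal ?k * ennreal (exp (- (1/2 - c) * (norm x)\<^sup>2)) \<partial>(lborel :: 'a measure))"
    unfolding std_gauss_def
    by (subst nn_integral_density)
       (auto intro!: nn_integral_cong simp: ennreal_mult'[symmetric] exp_add[symmetric] algebra_simps)
  also have "\<dots> = ennreal ?k * (\<integral>\<^sup>+x. ennreal (exp (- (1/2 - c) * (norm x)\<^sup>2)) \<partial>(lborel :: 'a measure))"
    by (rule nn_integral_cmult) simp
  also have "\<dots> = ennreal (?k * sqrt (pi / (1/2 - c)) ^ DIM('a))"
    using assms by (subst nn_integral_exp_neg_norm_sq_lborel) (auto simp: ennreal_mult')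
  finally show ?thesis .
qed

lemma prob_space_std_gauss: "prob_space (std_gauss :: 'a::euclidean_space measure)"
proof
  have "sqrt (2 * pi) ^ DIM('a) = (2 * pi) powr (real DIM('a) / 2)"
    by (simp add: powr_half_sqrt[symmetric] powr_realpow[symmetric] powr_powr)
  then have "(2 * pi) powr (- real DIM('a) / 2) * sqrt (pi / (1/2 - 0)) ^ DIM('a) = 1"
    by (simp add: powr_add[symmetric] mult.commute)
  then show "emeasure (std_gauss :: 'a measure) (space std_gauss) = 1"
    using nn_integral_std_gauss_exp_norm_sq[of 0, where 'a='a] by simp
qed

lemma sets_pair_std_gauss:
  assumes "sets \<nu> = sets borel"
  shows "sets (\<nu> \<Otimes>\<^sub>M (std_gauss :: 'a::euclidean_space measure)) = sets (borel \<Otimes>\<^sub>M borel)"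
  using assms by (intro sets_pair_measure_cong) (auto simp: std_gauss_def)

lemma measurable_sgld_step:
  fixes g :: "'a::euclidean_space \<Rightarrow> 'c::euclidean_space \<Rightarrow> 'a"
  assumes g_meas: "(\<lambda>p. g (fst p) (snd p)) \<in> borel_measurable borel"
    and nu: "sets \<nu> = sets borel"
  shows "(\<lambda>(x, z, e). x - \<eta> *\<^sub>R g x z + s *\<^sub>R e)
           \<in> borel \<Otimes>\<^sub>M (\<nu> \<Otimes>\<^sub>M (std_gauss :: 'a measure)) \<rightarrow>\<^sub>M borel"
proof -
  have [measurable]: "(\<lambda>(x, z). g x z) \<in> borel_measurable (borel \<Otimes>\<^sub>M borel)"
    using g_meas by (simp add: borel_prod case_prod_beta')
  have "(\<lambda>(x, z, e). x - \<eta> *\<^sub>R g x z + s *\<^sub>R e)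
      \<in> (borel :: 'a measure) \<Otimes>\<^sub>M ((borel :: 'c measure) \<Otimes>\<^sub>M (borel :: 'a measure)) \<rightarrow>\<^sub>M borel"
    by measurable
  then show ?thesis
    by (subst measurable_cong_sets[OF sets_pair_measure_cong[OF refl sets_pair_std_gauss[OF nu]] refl])
qed

lemma
  fixes g :: "'a::euclidean_space \<Rightarrow> 'c::euclidean_space \<Rightarrow> 'a"
  assumes g_meas: "(\<lambda>p. g (fst p) (snd p)) \<in> borel_measurable borel"
    and nu: "prob_space \<nu>" "sets \<nu> = sets borel"
  shows measurable_sgld_kernel: "sgld_kernel g \<nu> \<eta> \<delta> \<in> borel \<rightarrow>\<^sub>M subprob_algebra borel"
    and prob_space_sgld_kernel: "prob_space (sgld_kernel g \<nu> \<eta> \<delta> x)"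
proof -
  interpret prob_space "\<nu> \<Otimes>\<^sub>M (std_gauss :: 'a measure)"
    by (intro prob_space_pair nu prob_space_std_gauss)
  note step = measurable_sgld_step[OF g_meas nu(2), of \<eta> "sqrt (\<eta> * \<delta>)"]
  show "sgld_kernel g \<nu> \<eta> \<delta> \<in> borel \<rightarrow>\<^sub>M subprob_algebra borel"
    unfolding sgld_kernel_def
    by (rule measurable_distr2[OF step]) (rule measurable_const[OF M_in_subprob])
  show "prob_space (sgld_kernel g \<nu> \<eta> \<delta> x)"
    unfolding sgld_kernel_def by (rule prob_space_distr) (use step in measurable)
qed

lemma nn_integral_sgld_kernel:
  fixes g :: "'a::euclidean_space \<Rightarrow> 'c::euclidean_space \<Rightarrow> 'a"
  assumes g_meas: "(\<lambda>p. g (fst p) (snd p)) \<in> borel_measurable borel"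
    and nu: "sets \<nu> = sets borel"
    and f[measurable]: "f \<in> borel_measurable borel"
  shows "(\<integral>\<^sup>+y. f y \<partial>sgld_kernel g \<nu> \<eta> \<delta> x)
           = (\<integral>\<^sup>+z. \<integral>\<^sup>+e. f (x - \<eta> *\<^sub>R g x z + sqrt (\<eta> * \<delta>) *\<^sub>R e) \<partial>std_gauss \<partial>\<nu>)"
proof -
  interpret std_gauss: prob_space "std_gauss :: 'a measure"
    by (rule prob_space_std_gauss)
  define F where "F = (\<lambda>(z, e). x - \<eta> *\<^sub>R g x z + sqrt (\<eta> * \<delta>) *\<^sub>R e)"
  have [measurable]: "F \<in> \<nu> \<Otimes>\<^sub>M (std_gauss :: 'a measure) \<rightarrow>\<^sub>M borel"
    using measurable_Pair2[OF measurable_sgld_step[OF g_meas nu], of x]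
    by (simp add: F_def case_prod_beta')
  have "(\<integral>\<^sup>+y. f y \<partial>sgld_kernel g \<nu> \<eta> \<delta> x) = (\<integral>\<^sup>+p. f (F p) \<partial>(\<nu> \<Otimes>\<^sub>M std_gauss))"
    unfolding sgld_kernel_def F_def[symmetric] by (simp add: nn_integral_distr)
  also have "\<dots> = (\<integral>\<^sup>+z. \<integral>\<^sup>+e. f (F (z, e)) \<partial>std_gauss \<partial>\<nu>)"
    by (rule std_gauss.nn_integral_fst[symmetric]) measurable
  finally show ?thesis
    by (simp add: F_def)
qed

lemma power2_norm_add_le:
  fixes y e :: "'a::real_inner"
  assumes "\<epsilon> > 0"
  shows "(norm (y + e))\<^sup>2 \<le> (1 + \<epsilon>) * (norm y)\<^sup>2 + (1 + 1 / \<epsilon>) * (norm e)\<^sup>2"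
proof -
  have "0 \<le> \<epsilon> * (norm y - norm e / \<epsilon>)\<^sup>2"
    using assms by simp
  also have "\<dots> = \<epsilon> * (norm y)\<^sup>2 + (norm e)\<^sup>2 / \<epsilon> - 2 * (norm y * norm e)"
    using assms by (simp add: power2_eq_square field_simps)
  finally have "2 * (y \<bullet> e) \<le> \<epsilon> * (norm y)\<^sup>2 + (norm e)\<^sup>2 / \<epsilon>"
    using Cauchy_Schwarz_ineq2[of y e] by linarith
  moreover have "(norm (y + e))\<^sup>2 = (norm y)\<^sup>2 + 2 * (y \<bullet> e) + (norm e)\<^sup>2"
    unfolding power2_norm_eq_inner by (simp add: algebra_simps inner_commute)
  ultimately show ?thesis
    by (simp add: algebra_simps)
qed

lemma gradient_step_norm_sq_le:
  fixes x a b :: "'a::real_inner"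
  assumes K1: "K1 > 0" and L: "L > 0" and eta: "\<eta> > 0" "\<eta> \<le> K1 / (4 * L\<^sup>2)"
    and lip: "norm (a - b) \<le> L * norm x"
    and diss: "x \<bullet> (- a + b) \<le> - K1 * (norm x)\<^sup>2 + K2"
  shows "(norm (x - \<eta> *\<^sub>R a))\<^sup>2
           \<le> (1 - \<eta> * K1) * (norm x)\<^sup>2 + 2 * \<eta> * K2 + (2 * \<eta> / K1 + 2 * \<eta>\<^sup>2) * (norm b)\<^sup>2"
proof -
  define X where "X = norm x"
  define Y where "Y = norm b"
  have expand: "(norm (x - \<eta> *\<^sub>R a))\<^sup>2 = X\<^sup>2 - 2 * \<eta> * (x \<bullet> a) + \<eta>\<^sup>2 * (norm a)\<^sup>2"
    unfolding X_def power2_norm_eq_inner by (simp add: algebra_simps inner_commute power2_eq_square)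
  have inner_le: "- (x \<bullet> a) \<le> - K1 * X\<^sup>2 + K2 + X * Y"
    using diss Cauchy_Schwarz_ineq2[of x b]
    by (simp add: X_def Y_def inner_diff_right abs_le_iff)
  have "(norm a)\<^sup>2 \<le> (Y + L * X)\<^sup>2"
    using norm_triangle_ineq[of "a - b" b] lip by (simp add: X_def Y_def power_mono)
  also have "\<dots> \<le> 2 * Y\<^sup>2 + 2 * L\<^sup>2 * X\<^sup>2"
    using zero_le_power2[of "Y - L * X"] by (simp add: power2_eq_square algebra_simps)
  finally have norm_a: "(norm a)\<^sup>2 \<le> 2 * Y\<^sup>2 + 2 * L\<^sup>2 * X\<^sup>2" .
  have amgm: "2 * X * Y \<le> (K1 / 2) * X\<^sup>2 + (2 / K1) * Y\<^sup>2"
  proof -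
    have "0 \<le> (K1 / 2) * (X - (2 / K1) * Y)\<^sup>2"
      using K1 by simp
    also have "\<dots> = (K1 / 2) * X\<^sup>2 + (2 / K1) * Y\<^sup>2 - 2 * X * Y"
      using K1 by (simp add: power2_eq_square field_simps)
    finally show ?thesis by simp
  qed
  have small_eta: "2 * \<eta>\<^sup>2 * L\<^sup>2 \<le> \<eta> * K1 / 2"
  proof -
    have "\<eta> * L\<^sup>2 \<le> K1 / 4"
      using eta(2) L by (simp add: field_simps)
    then have "\<eta> * (\<eta> * L\<^sup>2) \<le> \<eta> * (K1 / 4)"
      using eta(1) by (intro mult_left_mono) auto
    then show ?thesis
      by (simp add: power2_eq_square algebra_simps)
  qed
  have "(norm (x - \<eta> *\<^sub>R a))\<^sup>2
      \<le> X\<^sup>2 + 2 * \<eta> * (- K1 * X\<^sup>2 + K2 + X * Y) + \<eta>\<^sup>2 * (2 * Y\<^sup>2 + 2 * L\<^sup>2 * X\<^sup>2)"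
  proof -
    have "2 * \<eta> * (- (x \<bullet> a)) \<le> 2 * \<eta> * (- K1 * X\<^sup>2 + K2 + X * Y)"
      using inner_le eta(1) by (intro mult_left_mono) auto
    moreover have "\<eta>\<^sup>2 * (norm a)\<^sup>2 \<le> \<eta>\<^sup>2 * (2 * Y\<^sup>2 + 2 * L\<^sup>2 * X\<^sup>2)"
      using norm_a by (intro mult_left_mono) auto
    ultimately show ?thesis
      unfolding expand by linarith
  qed
  also have "\<dots> = X\<^sup>2 - 2 * \<eta> * K1 * X\<^sup>2 + 2 * \<eta> * K2 + \<eta> * (2 * X * Y)
                  + 2 * \<eta>\<^sup>2 * Y\<^sup>2 + (2 * \<eta>\<^sup>2 * L\<^sup>2) * X\<^sup>2"
    by (simp add: algebra_simps)
  also have "\<dots> \<le> X\<^sup>2 - 2 * \<eta> * K1 * X\<^sup>2 + 2 * \<eta> * K2 + \<eta> * ((K1 / 2) * X\<^sup>2 + (2 / K1) * Y\<^sup>2)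
                  + 2 * \<eta>\<^sup>2 * Y\<^sup>2 + (\<eta> * K1 / 2) * X\<^sup>2"
    using amgm small_eta eta(1) by (intro add_mono mult_left_mono mult_right_mono) auto
  also have "\<dots> = (1 - \<eta> * K1) * X\<^sup>2 + 2 * \<eta> * K2 + (2 * \<eta> / K1 + 2 * \<eta>\<^sup>2) * Y\<^sup>2"
    by (simp add: algebra_simps)
  finally show ?thesis
    by (simp add: X_def Y_def)
qed

lemma noisy_gradient_step_norm_sq_le:
  fixes x a b e :: "'a::real_inner"
  assumes K1: "K1 > 0" and L: "L > 0" and eta: "\<eta> > 0" "\<eta> \<le> K1 / (4 * L\<^sup>2)"
    and lip: "norm (a - b) \<le> L * norm x"
    and diss: "x \<bullet> (- a + b) \<le> - K1 * (norm x)\<^sup>2 + K2"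
  shows "(norm (x - \<eta> *\<^sub>R a + s *\<^sub>R e))\<^sup>2
           \<le> (1 - \<eta> * K1 / 2) * (norm x)\<^sup>2
             + (1 + \<eta> * K1 / 2) * (2 * \<eta> * K2)
             + (1 + \<eta> * K1 / 2) * (2 * \<eta> / K1 + 2 * \<eta>\<^sup>2) * (norm b)\<^sup>2
             + (1 + 2 / (\<eta> * K1)) * s\<^sup>2 * (norm e)\<^sup>2"
proof -
  define \<epsilon> where "\<epsilon> = \<eta> * K1 / 2"
  have \<epsilon>: "\<epsilon> > 0"
    using eta K1 by (simp add: \<epsilon>_def)
  have contraction: "(1 + \<epsilon>) * (1 - \<eta> * K1) \<le> 1 - \<eta> * K1 / 2"
    using eta K1 by (simp add: \<epsilon>_def algebra_simps power2_eq_square)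
  have "(norm (x - \<eta> *\<^sub>R a + s *\<^sub>R e))\<^sup>2
      \<le> (1 + \<epsilon>) * (norm (x - \<eta> *\<^sub>R a))\<^sup>2 + (1 + 1 / \<epsilon>) * (s\<^sup>2 * (norm e)\<^sup>2)"
    using power2_norm_add_le[OF \<epsilon>, of "x - \<eta> *\<^sub>R a" "s *\<^sub>R e"]
    by (simp add: power_mult_distrib)
  also have "\<dots> \<le> (1 + \<epsilon>) * ((1 - \<eta> * K1) * (norm x)\<^sup>2
                    + 2 * \<eta> * K2 + (2 * \<eta> / K1 + 2 * \<eta>\<^sup>2) * (norm b)\<^sup>2)
                  + (1 + 1 / \<epsilon>) * (s\<^sup>2 * (norm e)\<^sup>2)"
    using gradient_step_norm_sq_le[OF K1 L eta lip diss] \<epsilon> by simp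
  also have "\<dots> \<le> (1 - \<eta> * K1 / 2) * (norm x)\<^sup>2 + (1 + \<epsilon>) * (2 * \<eta> * K2)
                  + (1 + \<epsilon>) * (2 * \<eta> / K1 + 2 * \<eta>\<^sup>2) * (norm b)\<^sup>2
                  + (1 + 1 / \<epsilon>) * s\<^sup>2 * (norm e)\<^sup>2"
    using mult_right_mono[OF contraction, of "(norm x)\<^sup>2"] by (simp add: algebra_simps)
  also have "1 / \<epsilon> = 2 / (\<eta> * K1)"
    by (simp add: \<epsilon>_def)
  finally show ?thesis
    by (simp only: \<epsilon>_def)
qed

lemma sgld_kernel_exp_norm_sq_le:
  fixes g :: "'a::euclidean_space \<Rightarrow> 'c::euclidean_space \<Rightarrow> 'a"
  assumes g_meas: "(\<lambda>p. g (fst p) (snd p)) \<in> borel_measurable borel"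
    and nu: "sets \<nu> = sets borel"
    and \<gamma>: "\<gamma> \<ge> 0"
    and step: "\<And>z e. (norm (x - \<eta> *\<^sub>R g x z + sqrt (\<eta> * \<delta>) *\<^sub>R e))\<^sup>2
                       \<le> a + \<kappa> * (norm (g 0 z))\<^sup>2 + q * (norm e)\<^sup>2"
  shows "(\<integral>\<^sup>+y. ennreal (exp (\<gamma> * (norm y)\<^sup>2)) \<partial>sgld_kernel g \<nu> \<eta> \<delta> x)
           \<le> ennreal (exp (\<gamma> * a))
             * (\<integral>\<^sup>+z. ennreal (exp (\<gamma> * \<kappa> * (norm (g 0 z))\<^sup>2)) \<partial>\<nu>)
             * (\<integral>\<^sup>+e. ennreal (exp (\<gamma> * q * (norm e)\<^sup>2)) \<partial>(std_gauss :: 'a measure))"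
proof -
  have [measurable]: "(\<lambda>(x, z). g x z) \<in> borel_measurable (borel \<Otimes>\<^sub>M borel)"
    using g_meas by (simp add: borel_prod case_prod_beta')
  have "(\<lambda>z. ennreal (exp (\<gamma> * \<kappa> * (norm (g 0 z))\<^sup>2))) \<in> borel_measurable borel"
    by measurable
  then have meas_\<nu>: "(\<lambda>z. ennreal (exp (\<gamma> * \<kappa> * (norm (g 0 z))\<^sup>2))) \<in> borel_measurable \<nu>"
    by (simp add: measurable_cong_sets[OF nu refl])
  have meas_gauss: "(\<lambda>e. ennreal (exp (\<gamma> * q * (norm e)\<^sup>2))) \<in> borel_measurable (std_gauss :: 'a measure)"
    by (simp add: std_gauss_def)
  have pointwise: "exp (\<gamma> * (norm (x - \<eta> *\<^sub>R g x z + sqrt (\<eta> * \<delta>) *\<^sub>R e))\<^sup>2)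
      \<le> exp (\<gamma> * a) * exp (\<gamma> * \<kappa> * (norm (g 0 z))\<^sup>2) * exp (\<gamma> * q * (norm e)\<^sup>2)" for z e
    using mult_left_mono[OF step[of z e] \<gamma>] by (simp add: exp_add[symmetric] algebra_simps)
  have "(\<integral>\<^sup>+y. ennreal (exp (\<gamma> * (norm y)\<^sup>2)) \<partial>sgld_kernel g \<nu> \<eta> \<delta> x)
      = (\<integral>\<^sup>+z. \<integral>\<^sup>+e. ennreal (exp (\<gamma> * (norm (x - \<eta> *\<^sub>R g x z + sqrt (\<eta> * \<delta>) *\<^sub>R e))\<^sup>2))
           \<partial>std_gauss \<partial>\<nu>)"
    by (rule nn_integral_sgld_kernel[OF g_meas nu]) measurable
  also have "\<dots> \<le> (\<integral>\<^sup>+z. \<integral>\<^sup>+e. ennreal (exp (\<gamma> * a) * exp (\<gamma> * \<kappa> * (norm (g 0 z))\<^sup>2)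
                      * exp (\<gamma> * q * (norm e)\<^sup>2)) \<partial>(std_gauss :: 'a measure) \<partial>\<nu>)"
    by (intro nn_integral_mono ennreal_leI pointwise)
  also have "\<dots> = (\<integral>\<^sup>+z. ennreal (exp (\<gamma> * a)) * ennreal (exp (\<gamma> * \<kappa> * (norm (g 0 z))\<^sup>2))
                    * (\<integral>\<^sup>+e. ennreal (exp (\<gamma> * q * (norm e)\<^sup>2)) \<partial>(std_gauss :: 'a measure)) \<partial>\<nu>)"
    by (simp add: ennreal_mult' nn_integral_cmult[OF meas_gauss])
  also have "\<dots> = ennreal (exp (\<gamma> * a))
                  * (\<integral>\<^sup>+z. ennreal (exp (\<gamma> * \<kappa> * (norm (g 0 z))\<^sup>2)) \<partial>\<nu>)
                  * (\<integral>\<^sup>+e. ennreal (exp (\<gamma> * q * (norm e)\<^sup>2)) \<partial>(std_gauss :: 'a measure))"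
    using meas_\<nu> by (subst nn_integral_multc) (auto simp: nn_integral_cmult)
  finally show ?thesis .
qed

lemma sgld_kernel_exp_norm_sq_drift:
  fixes g :: "'a::euclidean_space \<Rightarrow> 'c::euclidean_space \<Rightarrow> 'a"
  assumes g_meas: "(\<lambda>p. g (fst p) (snd p)) \<in> borel_measurable borel"
    and nu: "sets \<nu> = sets borel"
    and delta: "\<delta> > 0"
    and K1: "K1 > 0" and L: "L > 0"
    and lip: "\<And>x y z. norm (g x z - g y z) \<le> L * norm (x - y)"
    and diss: "\<And>x y z. (x - y) \<bullet> (- g x z + g y z) \<le> - K1 * (norm (x - y))\<^sup>2 + K2"
    and K0: "K0 > 0"
    and finite_moment: "(\<integral>\<^sup>+z. ennreal (exp (K0 * (norm (g 0 z))\<^sup>2)) \<partial>\<nu>) < \<infinity>"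
    and eta: "\<eta> > 0" "\<eta> \<le> K1 / (4 * L\<^sup>2)"
  shows "\<exists>\<gamma>0>0. \<forall>\<gamma>. 0 < \<gamma> \<and> \<gamma> < \<gamma>0 \<longrightarrow> (\<exists>D. \<forall>x.
           (\<integral>\<^sup>+y. ennreal (exp (\<gamma> * (norm y)\<^sup>2)) \<partial>sgld_kernel g \<nu> \<eta> \<delta> x)
             \<le> ennreal (D * exp (\<gamma> * (1 - \<eta> * K1 / 2) * (norm x)\<^sup>2)))"
proof -
  define \<kappa> where "\<kappa> = (1 + \<eta> * K1 / 2) * (2 * \<eta> / K1 + 2 * \<eta>\<^sup>2)"
  define q where "q = (1 + 2 / (\<eta> * K1)) * (\<eta> * \<delta>)"
  have "\<kappa> > 0" "q > 0"
    using eta K1 delta by (auto simp: \<kappa>_def q_def intro!: mult_pos_pos add_pos_pos)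
  have step: "(norm (x - \<eta> *\<^sub>R g x z + sqrt (\<eta> * \<delta>) *\<^sub>R e))\<^sup>2
      \<le> ((1 - \<eta> * K1 / 2) * (norm x)\<^sup>2 + (1 + \<eta> * K1 / 2) * (2 * \<eta> * K2))
        + \<kappa> * (norm (g 0 z))\<^sup>2 + q * (norm e)\<^sup>2" for x z e
    using noisy_gradient_step_norm_sq_le[OF K1 L eta, of "g x z" "g 0 z" x K2 "sqrt (\<eta> * \<delta>)" e]
      lip[of x z 0] diss[of x 0 z] eta delta
    by (simp add: \<kappa>_def q_def mult.assoc)
  have "\<exists>D. \<forall>x. (\<integral>\<^sup>+y. ennreal (exp (\<gamma> * (norm y)\<^sup>2)) \<partial>sgld_kernel g \<nu> \<eta> \<delta> x)
               \<le> ennreal (D * exp (\<gamma> * (1 - \<eta> * K1 / 2) * (norm x)\<^sup>2))"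
    if \<gamma>: "0 < \<gamma>" "\<gamma> < min (K0 / \<kappa>) (1 / (2 * q))" for \<gamma>
  proof -
    define E where "E = exp (\<gamma> * ((1 + \<eta> * K1 / 2) * (2 * \<eta> * K2)))"
    define G where "G = (2 * pi) powr (- real DIM('a) / 2) * sqrt (pi / (1/2 - \<gamma> * q)) ^ DIM('a)"
    have "\<gamma> * \<kappa> \<le> K0" "\<gamma> * q < 1/2"
      using \<gamma> \<open>\<kappa> > 0\<close> \<open>q > 0\<close> by (auto simp: field_simps)
    then have "G \<ge> 0"
      by (simp add: G_def)
    obtain r where "r \<ge> 0"
      and r: "(\<integral>\<^sup>+z. ennreal (exp (K0 * (norm (g 0 z))\<^sup>2)) \<partial>\<nu>) = ennreal r"
      using finite_moment by (auto simp: less_top_ennreal)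
    have moment_\<nu>: "(\<integral>\<^sup>+z. ennreal (exp (\<gamma> * \<kappa> * (norm (g 0 z))\<^sup>2)) \<partial>\<nu>) \<le> ennreal r"
      unfolding r[symmetric] using \<open>\<gamma> * \<kappa> \<le> K0\<close>
      by (intro nn_integral_mono ennreal_leI) (auto intro!: mult_right_mono)
    have moment_gauss: "(\<integral>\<^sup>+e. ennreal (exp (\<gamma> * q * (norm e)\<^sup>2)) \<partial>(std_gauss :: 'a measure)) = ennreal G"
      unfolding G_def using \<open>\<gamma> * q < 1/2\<close> by (rule nn_integral_std_gauss_exp_norm_sq)
    show ?thesis
    proof (intro exI[of _ "E * r * G"] allI)
      fix x :: 'a
      let ?a = "(1 - \<eta> * K1 / 2) * (norm x)\<^sup>2 + (1 + \<eta> * K1 / 2) * (2 * \<eta> * K2)"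
      have "(\<integral>\<^sup>+y. ennreal (exp (\<gamma> * (norm y)\<^sup>2)) \<partial>sgld_kernel g \<nu> \<eta> \<delta> x)
          \<le> ennreal (exp (\<gamma> * ?a))
            * (\<integral>\<^sup>+z. ennreal (exp (\<gamma> * \<kappa> * (norm (g 0 z))\<^sup>2)) \<partial>\<nu>)
            * (\<integral>\<^sup>+e. ennreal (exp (\<gamma> * q * (norm e)\<^sup>2)) \<partial>(std_gauss :: 'a measure))"
        using \<gamma>(1) by (intro sgld_kernel_exp_norm_sq_le[OF g_meas nu _ step]) simp
      also have "\<dots> \<le> ennreal (exp (\<gamma> * ?a)) * ennreal r * ennreal G"
        unfolding moment_gauss by (intro mult_right_mono mult_left_mono moment_\<nu>) simp_all
      also have "\<dots> = ennreal (E * r * G * exp (\<gamma> * (1 - \<eta> * K1 / 2) * (norm x)\<^sup>2))"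
        using \<open>r \<ge> 0\<close> \<open>G \<ge> 0\<close>
        by (simp add: E_def ennreal_mult[symmetric] distrib_left exp_add mult_ac)
      finally show "(\<integral>\<^sup>+y. ennreal (exp (\<gamma> * (norm y)\<^sup>2)) \<partial>sgld_kernel g \<nu> \<eta> \<delta> x)
          \<le> ennreal (E * r * G * exp (\<gamma> * (1 - \<eta> * K1 / 2) * (norm x)\<^sup>2))" .
    qed
  qed
  moreover have "min (K0 / \<kappa>) (1 / (2 * q)) > 0"
    using K0 \<open>\<kappa> > 0\<close> \<open>q > 0\<close> by simp
  ultimately show ?thesis
    by blast
qed

lemma invariant_nn_integral_mono:
  fixes P :: "'a::topological_space \<Rightarrow> 'a measure"
  assumes pi: "sets \<pi> = sets (borel :: 'a measure)"
    and P: "P \<in> borel \<rightarrow>\<^sub>M subprob_algebra borel"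
    and invariant: "\<pi> \<bind> P = \<pi>"
    and h: "h \<in> borel_measurable borel"
    and bound: "\<And>x. (\<integral>\<^sup>+y. h y \<partial>P x) \<le> f x"
  shows "(\<integral>\<^sup>+x. h x \<partial>\<pi>) \<le> (\<integral>\<^sup>+x. f x \<partial>\<pi>)"
proof -
  have "(\<integral>\<^sup>+x. h x \<partial>\<pi>) = (\<integral>\<^sup>+x. \<integral>\<^sup>+y. h y \<partial>P x \<partial>\<pi>)"
    using nn_integral_bind[OF h, of P \<pi>] P invariant by (simp add: measurable_cong_sets[OF pi refl])
  also have "\<dots> \<le> (\<integral>\<^sup>+x. f x \<partial>\<pi>)"
    by (intro nn_integral_mono bound)
  finally show ?thesis .
qed

lemma invariant_truncated_nn_integral_le:
  fixes V :: "'a::topological_space \<Rightarrow> real" and P :: "'a \<Rightarrow> 'a measure"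
  assumes pi: "prob_space \<pi>" "sets \<pi> = sets (borel :: 'a measure)"
    and P: "P \<in> borel \<rightarrow>\<^sub>M subprob_algebra borel" "\<And>x. prob_space (P x)"
    and invariant: "\<pi> \<bind> P = \<pi>"
    and V[measurable]: "V \<in> borel_measurable borel" and V_nonneg: "\<And>x. V x \<ge> 0"
    and \<rho>: "0 \<le> \<rho>" "\<rho> < 1" and B: "B \<ge> 0"
    and drift: "\<And>x. (\<integral>\<^sup>+y. V y \<partial>P x) \<le> ennreal (\<rho> * V x + B)"
    and M: "M \<ge> 0"
  shows "ennreal (1 - \<rho>) * (\<integral>\<^sup>+x. ennreal (if V x \<le> M then V x else 0) \<partial>\<pi>) \<le> ennreal B"
proof -
  note [measurable_cong] = pi(2)
  interpret \<pi>: prob_space \<pi> by (rule pi(1))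
  define h where "h x = min (V x) M" for x
  define f where "f x = min (\<rho> * V x + B) M" for x
  define w where "w x = (if V x \<le> M then V x else 0)" for x
  have [measurable]: "h \<in> borel_measurable borel" "f \<in> borel_measurable borel" "w \<in> borel_measurable borel"
    unfolding h_def[abs_def] f_def[abs_def] w_def[abs_def] by measurable
  have h_le_f: "(\<integral>\<^sup>+x. h x \<partial>\<pi>) \<le> (\<integral>\<^sup>+x. f x \<partial>\<pi>)"
  proof (rule invariant_nn_integral_mono[OF pi(2) P(1) invariant])
    fix x
    interpret Px: prob_space "P x" by (rule P(2))
    have "(\<integral>\<^sup>+y. h y \<partial>P x) \<le> (\<integral>\<^sup>+y. V y \<partial>P x)"
      by (intro nn_integral_mono ennreal_leI) (simp add: h_def)
    also have "\<dots> \<le> ennreal (\<rho> * V x + B)"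
      by (rule drift)
    finally have "(\<integral>\<^sup>+y. h y \<partial>P x) \<le> ennreal (\<rho> * V x + B)" .
    moreover have "(\<integral>\<^sup>+y. h y \<partial>P x) \<le> (\<integral>\<^sup>+y. M \<partial>P x)"
      by (intro nn_integral_mono ennreal_leI) (simp add: h_def)
    ultimately show "(\<integral>\<^sup>+y. h y \<partial>P x) \<le> f x"
      using Px.emeasure_space_1 V_nonneg[of x] \<rho> B M by (simp add: f_def min_ennreal[symmetric])
  qed measurable
  have h_finite: "(\<integral>\<^sup>+x. h x \<partial>\<pi>) \<noteq> \<infinity>"
  proof -
    have "(\<integral>\<^sup>+x. h x \<partial>\<pi>) \<le> (\<integral>\<^sup>+x. M \<partial>\<pi>)"
      by (intro nn_integral_mono ennreal_leI) (simp add: h_def)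
    then show ?thesis
      using \<pi>.emeasure_space_1 by (auto simp: top_unique)
  qed
  (* Where V exceeds M, w vanishes and h = M already dominates f. *)
  have pointwise: "ennreal (f x) + ennreal ((1 - \<rho>) * w x) \<le> ennreal (h x) + ennreal B" for x
  proof -
    have "f x + (1 - \<rho>) * w x \<le> h x + B" "f x \<ge> 0" "(1 - \<rho>) * w x \<ge> 0" "h x \<ge> 0"
      using V_nonneg[of x] \<rho> B M mult_left_le_one_le[of "V x" \<rho>]
      by (auto simp: f_def h_def w_def algebra_simps)
    then show ?thesis
      using B by (simp add: ennreal_plus[symmetric] del: ennreal_plus)
  qed
  have "(\<integral>\<^sup>+x. h x \<partial>\<pi>) + (\<integral>\<^sup>+x. (1 - \<rho>) * w x \<partial>\<pi>)
      \<le> (\<integral>\<^sup>+x. f x \<partial>\<pi>) + (\<integral>\<^sup>+x. (1 - \<rho>) * w x \<partial>\<pi>)"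
    using h_le_f by (rule add_right_mono)
  also have "\<dots> = (\<integral>\<^sup>+x. ennreal (f x) + ennreal ((1 - \<rho>) * w x) \<partial>\<pi>)"
    by (rule nn_integral_add[symmetric]) auto
  also have "\<dots> \<le> (\<integral>\<^sup>+x. ennreal (h x) + ennreal B \<partial>\<pi>)"
    by (intro nn_integral_mono pointwise)
  also have "\<dots> = (\<integral>\<^sup>+x. h x \<partial>\<pi>) + ennreal B"
    by (simp add: nn_integral_add \<pi>.emeasure_space_1)
  finally have "(\<integral>\<^sup>+x. (1 - \<rho>) * w x \<partial>\<pi>) \<le> ennreal B"
    using h_finite by (simp add: ennreal_add_left_cancel_le)
  then show ?thesis
    using \<rho> V_nonneg by (simp add: w_def ennreal_mult nn_integral_cmult)
qed

lemma invariant_nn_integral_le: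
  fixes V :: "'a::topological_space \<Rightarrow> real" and P :: "'a \<Rightarrow> 'a measure"
  assumes pi: "prob_space \<pi>" "sets \<pi> = sets (borel :: 'a measure)"
    and P: "P \<in> borel \<rightarrow>\<^sub>M subprob_algebra borel" "\<And>x. prob_space (P x)"
    and invariant: "\<pi> \<bind> P = \<pi>"
    and V[measurable]: "V \<in> borel_measurable borel" and V_nonneg: "\<And>x. V x \<ge> 0"
    and \<rho>: "0 \<le> \<rho>" "\<rho> < 1" and B: "B \<ge> 0"
    and drift: "\<And>x. (\<integral>\<^sup>+y. V y \<partial>P x) \<le> ennreal (\<rho> * V x + B)"
  shows "(\<integral>\<^sup>+x. V x \<partial>\<pi>) \<le> ennreal (B / (1 - \<rho>))"
proof -
  note [measurable_cong] = pi(2)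
  define w where "w n x = ennreal (if V x \<le> real n then V x else 0)" for n x
  have "(\<lambda>x. ennreal (V x)) = (\<lambda>x. SUP n. w n x)"
  proof
    fix x
    obtain N :: nat where "V x \<le> real N"
      using real_arch_simple by blast
    then show "ennreal (V x) = (SUP n. w n x)"
      by (intro antisym SUP_upper2[where i = N] SUP_least) (auto simp: w_def)
  qed
  then have "(\<integral>\<^sup>+x. V x \<partial>\<pi>) = (SUP n. \<integral>\<^sup>+x. w n x \<partial>\<pi>)"
    by (simp add: nn_integral_monotone_convergence_SUP incseq_def le_fun_def w_def ennreal_leI)
  then have "ennreal (1 - \<rho>) * (\<integral>\<^sup>+x. V x \<partial>\<pi>) \<le> ennreal B"
    using invariant_truncated_nn_integral_le[OF pi P invariant V V_nonneg \<rho> B drift]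
    by (simp add: SUP_mult_left_ennreal SUP_least w_def)
  then have "ennreal (1 / (1 - \<rho>)) * (ennreal (1 - \<rho>) * (\<integral>\<^sup>+x. V x \<partial>\<pi>))
      \<le> ennreal (1 / (1 - \<rho>)) * ennreal B"
    by (rule mult_left_mono) simp
  then show ?thesis
    using \<rho> B by (simp add: ennreal_mult[symmetric] mult.assoc[symmetric])
qed

lemma exp_le_scaled_exp_plus_const:
  fixes a b r D :: real
  assumes ab: "a < b" and r: "r > 0"
  shows "\<exists>B\<ge>0. \<forall>t\<ge>0. D * exp (a * t) \<le> r * exp (b * t) + B"
proof -
  define D' where "D' = max D 0"
  define R where "R = ln (D' / r) / (b - a)"
  have "D * exp (a * t) \<le> r * exp (b * t) + D' * exp (\<bar>a\<bar> * R)" if t: "t \<ge> 0" for t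
  proof -
    have "D * exp (a * t) \<le> D' * exp (a * t)"
      by (simp add: D'_def)
    moreover have "D' * exp (a * t) \<le> r * exp (b * t) + D' * exp (\<bar>a\<bar> * R)"
    proof (cases "D' / r \<le> exp ((b - a) * t)")
      case True
      then have "D' * exp (a * t) \<le> r * exp ((b - a) * t) * exp (a * t)"
        using r by (intro mult_right_mono) (auto simp: field_simps)
      also have "\<dots> = r * exp (b * t)"
        by (simp add: mult.assoc exp_add[symmetric] algebra_simps)
      finally show ?thesis
        by (simp add: D'_def add_increasing2)
    next
      case False
      have "0 < D' / r"
        using False exp_gt_zero[of "(b - a) * t"] by linarith
      then have "(b - a) * t < ln (D' / r)"
        using False by (metis exp_ln exp_less_cancel_iff not_le)
      then have "t < R"
        using ab by (simp add: R_def field_simps)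
      then have "a * t \<le> \<bar>a\<bar> * R"
        using t abs_ge_self[of a] by (meson abs_ge_zero less_imp_le mult_left_mono mult_right_mono order_trans)
      then have "exp (a * t) \<le> exp (\<bar>a\<bar> * R)"
        by simp
      then have "D' * exp (a * t) \<le> D' * exp (\<bar>a\<bar> * R)"
        by (intro mult_left_mono) (auto simp: D'_def)
      moreover have "r * exp (b * t) \<ge> 0"
        using r by simp
      ultimately show ?thesis
        by linarith
    qed
    ultimately show ?thesis by linarith
  qed
  then show ?thesis
    by (intro exI[of _ "D' * exp (\<bar>a\<bar> * R)"]) (simp add: D'_def)
qed

lemma invariant_exp_norm_sq_bounded:
  fixes P :: "'a::real_normed_vector \<Rightarrow> 'a measure"
  assumes pi: "prob_space \<pi>" "sets \<pi> = sets (borel :: 'a measure)"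
    and P: "P \<in> borel \<rightarrow>\<^sub>M subprob_algebra borel" "\<And>x. prob_space (P x)"
    and invariant: "\<pi> \<bind> P = \<pi>"
    and \<gamma>: "\<gamma> > 0" and \<rho>: "\<rho> < 1"
    and drift: "\<And>x. (\<integral>\<^sup>+y. ennreal (exp (\<gamma> * (norm y)\<^sup>2)) \<partial>P x)
                      \<le> ennreal (D * exp (\<gamma> * \<rho> * (norm x)\<^sup>2))"
  shows "\<exists>C. (\<integral>\<^sup>+x. ennreal (exp (\<gamma> * (norm x)\<^sup>2)) \<partial>\<pi>) \<le> ennreal C"
proof -
  obtain B where "B \<ge> 0" and B: "\<And>t. t \<ge> 0 \<Longrightarrow> D * exp (\<gamma> * \<rho> * t) \<le> 1/2 * exp (\<gamma> * t) + B"
    using exp_le_scaled_exp_plus_const[of "\<gamma> * \<rho>" \<gamma> "1/2" D] \<gamma> \<rho> by auto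
  have "(\<integral>\<^sup>+x. ennreal (exp (\<gamma> * (norm x)\<^sup>2)) \<partial>\<pi>) \<le> ennreal (B / (1 - 1/2))"
  proof (rule invariant_nn_integral_le[OF pi P invariant])
    show "(\<integral>\<^sup>+y. ennreal (exp (\<gamma> * (norm y)\<^sup>2)) \<partial>P x) \<le> ennreal (1/2 * exp (\<gamma> * (norm x)\<^sup>2) + B)"
      for x :: 'a
      using drift[of x] B[of "(norm x)\<^sup>2"] by (auto simp: mult.assoc intro: order_trans ennreal_leI)
  qed (use \<open>B \<ge> 0\<close> in auto)
  then show ?thesis
    by blast
qed

lemma sgld_law_invariant:
  assumes "\<pi> \<bind> sgld_kernel g \<nu> \<eta> \<delta> = \<pi>"
  shows "sgld_law g \<nu> \<eta> \<delta> \<pi> k = \<pi>"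
  using assms by (induction k) simp_all

theorem lemma6p1:
  fixes \<psi> :: "'a::euclidean_space \<Rightarrow> 'c::euclidean_space \<Rightarrow> real"
    and g :: "'a \<Rightarrow> 'c \<Rightarrow> 'a"
    and \<nu> :: "'c measure"
    and L K1 K2 \<delta> :: real
  assumes grad: "\<And>x z. ((\<lambda>y. \<psi> y z) has_derivative (\<lambda>h. g x z \<bullet> h)) (at x)"
    and g_meas: "(\<lambda>p. g (fst p) (snd p)) \<in> borel_measurable borel"
    and nu: "prob_space \<nu>" "sets \<nu> = sets borel"
    and delta: "\<delta> > 0"
    and A1_const: "L > 0" "K1 > 0" "K2 \<ge> 0"
    and A1_lip: "\<And>x y z. norm (g x z - g y z) \<le> L * norm (x - y)"
    and A1_diss: "\<And>x y z. (x - y) \<bullet> (- g x z + g y z) \<le> - K1 * (norm (x - y))\<^sup>2 + K2"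
    and A2: "\<And>x. \<exists>K\<zeta> C. K\<zeta> > 0 \<and> C > 0 \<and>
               (\<integral>\<^sup>+ z. ennreal (exp (K\<zeta> * (norm (g x z))\<^sup>2)) \<partial>\<nu>) \<le> ennreal C"
  shows "\<exists>\<eta>0 > 0. \<forall>\<eta>. 0 < \<eta> \<and> \<eta> < \<eta>0 \<longrightarrow>
           (\<exists>\<gamma>0 > 0. \<forall>\<gamma>. 0 < \<gamma> \<and> \<gamma> < \<gamma>0 \<longrightarrow>
              (\<forall>\<pi>. prob_space \<pi> \<and> sets \<pi> = sets (borel :: 'a measure) \<and>
                    \<pi> \<bind> sgld_kernel g \<nu> \<eta> \<delta> = \<pi> \<longrightarrow>
                 (\<exists>C. \<forall>k. (\<integral>\<^sup>+ x. ennreal (exp (\<gamma> * (norm x)\<^sup>2)) \<partial>(sgld_law g \<nu> \<eta> \<delta> \<pi> k))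
                            \<le> ennreal C)))"
proof (rule exI[of _ "K1 / (4 * L\<^sup>2)"], intro conjI allI impI)
  show "K1 / (4 * L\<^sup>2) > 0"
    using A1_const by simp
  fix \<eta> assume \<eta>: "0 < \<eta> \<and> \<eta> < K1 / (4 * L\<^sup>2)"
  obtain K0 C0 where "K0 > 0" and "(\<integral>\<^sup>+z. ennreal (exp (K0 * (norm (g 0 z))\<^sup>2)) \<partial>\<nu>) \<le> ennreal C0"
    using A2[of 0] by blast
  then obtain \<gamma>0 where "\<gamma>0 > 0" and drift: "\<And>\<gamma>. 0 < \<gamma> \<and> \<gamma> < \<gamma>0 \<Longrightarrow> \<exists>D. \<forall>x.
      (\<integral>\<^sup>+y. ennreal (exp (\<gamma> * (norm y)\<^sup>2)) \<partial>sgld_kernel g \<nu> \<eta> \<delta> x)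
        \<le> ennreal (D * exp (\<gamma> * (1 - \<eta> * K1 / 2) * (norm x)\<^sup>2))"
    using sgld_kernel_exp_norm_sq_drift[OF g_meas nu(2) delta A1_const(2,1) A1_lip A1_diss, of K0 \<eta>] \<eta>
    by (auto simp: order.strict_trans1 ennreal_less_top)
  show "\<exists>\<gamma>0>0. \<forall>\<gamma>. 0 < \<gamma> \<and> \<gamma> < \<gamma>0 \<longrightarrow>
          (\<forall>\<pi>. prob_space \<pi> \<and> sets \<pi> = sets (borel :: 'a measure) \<and> \<pi> \<bind> sgld_kernel g \<nu> \<eta> \<delta> = \<pi> \<longrightarrow>
             (\<exists>C. \<forall>k. (\<integral>\<^sup>+x. ennreal (exp (\<gamma> * (norm x)\<^sup>2)) \<partial>sgld_law g \<nu> \<eta> \<delta> \<pi> k) \<le> ennreal C))"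
  proof (rule exI[of _ \<gamma>0], intro conjI allI impI \<open>\<gamma>0 > 0\<close>)
    fix \<gamma> \<pi> assume \<gamma>: "0 < \<gamma> \<and> \<gamma> < \<gamma>0"
      and \<pi>: "prob_space \<pi> \<and> sets \<pi> = sets (borel :: 'a measure) \<and> \<pi> \<bind> sgld_kernel g \<nu> \<eta> \<delta> = \<pi>"
    obtain D where D: "\<And>x. (\<integral>\<^sup>+y. ennreal (exp (\<gamma> * (norm y)\<^sup>2)) \<partial>sgld_kernel g \<nu> \<eta> \<delta> x)
        \<le> ennreal (D * exp (\<gamma> * (1 - \<eta> * K1 / 2) * (norm x)\<^sup>2))"
      using drift[OF \<gamma>] by blast
    have "\<exists>C. (\<integral>\<^sup>+x. ennreal (exp (\<gamma> * (norm x)\<^sup>2)) \<partial>\<pi>) \<le> ennreal C"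
      by (rule invariant_exp_norm_sq_bounded[OF _ _ measurable_sgld_kernel[OF g_meas nu]
            prob_space_sgld_kernel[OF g_meas nu] _ _ _ D])
         (use \<pi> \<gamma> \<eta> A1_const in auto)
    then show "\<exists>C. \<forall>k. (\<integral>\<^sup>+x. ennreal (exp (\<gamma> * (norm x)\<^sup>2)) \<partial>sgld_law g \<nu> \<eta> \<delta> \<pi> k) \<le> ennreal C"
      using \<pi> by (auto simp: sgld_law_invariant)
  qed
qed

end
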